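(* Let $p,q\in E$, let $\mathsf{v}\in V$ be spacelike and let $\mathsf{w}\in V$ be future-pointing timelike with $\mathsf{w}\cdot\mathsf{v}\neq0$. Then $q+t\mathsf{w}\in\mathrm{int}\big(\mathcal{H}(\mathsf{v},p)\big)$ for all sufficiently large $t$ if and only if the point $[q+\mathbb{R}_+\mathsf{w}]\in\mathbb{H}^2$ lies in $\mathrm{int}\big(\mathcal{HS}(\mathsf{v})\big)$.
   Context: $V=\mathbb{R}^3$ with Lorentzian inner product $x\cdot y=x_1y_1+x_2y_2-x_3y_3$ and standard orientation; $E$ is the affine space with translation space $V$. Timelike: $x\cdot x<0$; null: $x\cdot x=0$; spacelike: $x\cdot x>0$; future-pointing: third coordinate positive. Points of $\mathbb{H}^2$ are identified with parallelism classes $[q+\mathbb{R}_+\mathsf{w}]$ of future-pointing timelike rays. For spacelike $\mathsf{v}$, $\mathcal{HS}(\mathsf{v})=\{[q+\mathbb{R}_+\mathsf{w}]\in\mathbb{H}^2:\mathsf{w}\cdot\mathsf{v}\ge0\}$ is a half-plane of $\mathbb{H}^2$. $\mathsf{v}^-,\mathsf{v}^+$ are the two future-pointing null vectors of Euclidean length $1$ in $\mathsf{v}^\perp$, labelled so that $(\mathsf{v}^-,\mathsf{v}^+,\mathsf{v})$ is positively oriented. The crooked half-space $\mathcal{H}(\mathsf{v},p)$ is the set of $q\in E$ with $(q-p)\cdot\mathsf{v}^+\le0$ if $(q-p)\cdot\mathsf{v}\ge0$, and $(q-p)\cdot\mathsf{v}^-\ge0$ if $(q-p)\cdot\mathsf{v}\le0$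 (both when $(q-p)\cdot\mathsf{v}=0$). *)

theory Defs
  imports "HOL-Analysis.Analysis"
begin

text \<open>V = R^3 with Lorentzian inner product; the affine space E is modelled by V itself.\<close>

definition lin :: "real^3 \<Rightarrow> real^3 \<Rightarrow> real" where
  "lin x y = x$1 * y$1 + x$2 * y$2 - x$3 * y$3"

definition timelike :: "real^3 \<Rightarrow> bool" where "timelike x \<longleftrightarrow> lin x x < 0"
definition nullvec :: "real^3 \<Rightarrow> bool" where "nullvec x \<longleftrightarrow> lin x x = 0"
definition spacelike :: "real^3 \<Rightarrow> bool" where "spacelike x \<longleftrightarrow> lin x x > 0"
definition future_pointing :: "real^3 \<Rightarrow> bool" where "future_pointing x \<longleftrightarrow> x$3 > 0"

definition det3 :: "real^3 \<Rightarrow> real^3 \<Rightarrow> real^3 \<Rightarrow> real" where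
  "det3 a b c = det ((\<chi> i. if i = 1 then a else if i = 2 then b else c) :: real^3^3)"

definition null_pair :: "real^3 \<Rightarrow> real^3 \<Rightarrow> real^3 \<Rightarrow> bool" where
  "null_pair v a b \<longleftrightarrow>
     nullvec a \<and> nullvec b \<and> future_pointing a \<and> future_pointing b \<and>
     norm a = 1 \<and> norm b = 1 \<and> lin a v = 0 \<and> lin b v = 0 \<and> det3 a b v > 0"

definition vminus :: "real^3 \<Rightarrow> real^3" where
  "vminus v = fst (THE ab. null_pair v (fst ab) (snd ab))"
definition vplus :: "real^3 \<Rightarrow> real^3" where
  "vplus v = snd (THE ab. null_pair v (fst ab) (snd ab))"

definition crooked_halfspace :: "real^3 \<Rightarrow> real^3 \<Rightarrow> (real^3) set" where
  "crooked_halfspace v p = {q.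
     (lin (q - p) v \<ge> 0 \<longrightarrow> lin (q - p) (vplus v) \<le> 0) \<and>
     (lin (q - p) v \<le> 0 \<longrightarrow> lin (q - p) (vminus v) \<ge> 0)}"

text \<open>H^2 modelled by the upper sheet of the hyperboloid (canonical representatives
  of parallelism classes of future-pointing timelike rays), with the subspace topology.\<close>
definition H2 :: "(real^3) set" where
  "H2 = {u. lin u u = -1 \<and> future_pointing u}"

text \<open>The point [q + R_+ w] of H^2 (independent of q).\<close>
definition ray_point :: "real^3 \<Rightarrow> real^3 \<Rightarrow> real^3" where
  "ray_point q w = (1 / sqrt (- lin w w)) *\<^sub>R w"

definition HS :: "real^3 \<Rightarrow> (real^3) set" where
  "HS v = {u \<in> H2. lin u v \<ge> 0}"

end

theory Submission
  imports Defs
begin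

text \<open>
  Along the ray q + t w every linear form lin (x - p) y grows like t * lin w y. Since w is
  future-pointing timelike and v-, v+ are future-pointing null, lin w v- < 0 and lin w v+ < 0.
  Hence if lin w v > 0 the ray eventually enters the open wedge lin (x - p) v > 0,
  lin (x - p) v+ < 0, which lies in the crooked half-space, while if lin w v < 0 it eventually
  stays where lin (x - p) v < 0 and lin (x - p) v- < 0, outside of it. The point [q + R+ w] is
  the positive multiple of w on the hyperboloid, so it lies in the interior of HS v exactly when
  lin w v > 0. What remains is to make sense of the definite descriptions vminus and vplus: for
  spacelike v the null pair exists and is unique, as an explicit computation shows.
\<close>

lemma det3_eq:
  "det3 a b c = a$1 * b$2 * c$3 + a$2 * b$3 * c$1 + a$3 * b$1 * c$2
               - a$1 * b$3 * c$2 - a$2 * b$1 * c$3 - a$3 * b$2 * c$1"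
  unfolding det3_def det_3 by simp

lemma norm_vec3: "norm (x :: real^3) = sqrt (x$1^2 + x$2^2 + x$3^2)"
  unfolding norm_vec_def L2_set_def sum_3 by simp

lemma spacelike_iff: "spacelike v \<longleftrightarrow> v$3^2 < v$1^2 + v$2^2"
  unfolding spacelike_def lin_def by (simp add: power2_eq_square)

lemma lin_scaleR_left: "lin (t *\<^sub>R x) z = t * lin x z"
  unfolding lin_def by (simp add: algebra_simps)

lemma lin_commute: "lin x y = lin y x"
  unfolding lin_def by (simp add: algebra_simps)

lemma continuous_on_lin_left: "continuous_on S (\<lambda>x. lin (x - p) z)"
  unfolding lin_def by (intro continuous_intros)

lemma unit_null_future_iff:
  "nullvec a \<and> future_pointing a \<and> norm a = 1 \<longleftrightarrow> a$3 = 1 / sqrt 2 \<and> a$1^2 + a$2^2 = 1/2"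
proof -
  have "a$3 = 1 / sqrt 2 \<longleftrightarrow> a$3 > 0 \<and> a$3^2 = 1/2"
  proof
    assume "a$3 > 0 \<and> a$3^2 = 1/2"
    then have "a$3 = sqrt (1/2)" using real_sqrt_unique by fastforce
    then show "a$3 = 1 / sqrt 2" by (simp add: real_sqrt_divide)
  qed (simp add: power_divide)
  then show ?thesis unfolding nullvec_def future_pointing_def lin_def norm_vec3
    by (auto simp: power2_eq_square)
qed

text \<open>
  With r = v1^2 + v2^2 and s = sqrt (r - v3^2), the horizontal parts of the null directions
  orthogonal to v are, up to the factor 1 / sqrt 2, the two points
  (v3 (v1, v2) - sigma s (-v2, v1)) / r where the unit circle meets the line x v1 + y v2 = v3;
  sigma = 1 gives v- and sigma = -1 gives v+.
\<close>
definition null_dir :: "real \<Rightarrow> real^3 \<Rightarrow> real^3" where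
  "null_dir \<sigma> v = (let r = v$1^2 + v$2^2; s = sqrt (r - v$3^2) in
     (1 / sqrt 2) *\<^sub>R vector [(v$3 * v$1 - \<sigma> * s * v$2) / r, (v$3 * v$2 + \<sigma> * s * v$1) / r, 1])"

lemma null_dir_unit_null_orth:
  assumes "spacelike v" "\<sigma>^2 = 1"
  shows "nullvec (null_dir \<sigma> v)" "future_pointing (null_dir \<sigma> v)"
    "norm (null_dir \<sigma> v) = 1" "lin (null_dir \<sigma> v) v = 0"
proof -
  define r where "r = v$1^2 + v$2^2"
  define s where "s = sqrt (r - v$3^2)"
  define x y where "x = (v$3 * v$1 - \<sigma> * s * v$2) / r" "y = (v$3 * v$2 + \<sigma> * s * v$1) / r"
  have "r > v$3^2" using assms(1) unfolding spacelike_iff r_def .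
  then have r: "r > 0" and s: "s^2 = r - v$3^2"
    unfolding s_def by (auto intro: le_less_trans[OF zero_le_power2])
  have dir: "null_dir \<sigma> v = (1 / sqrt 2) *\<^sub>R vector [x, y, 1]"
    unfolding null_dir_def x_y_def r_def s_def Let_def ..
  have "x^2 + y^2 = 1"
  proof -
    have "(v$3 * v$1 - \<sigma> * s * v$2)^2 + (v$3 * v$2 + \<sigma> * s * v$1)^2 = (v$3^2 + \<sigma>^2 * s^2) * r"
      unfolding r_def by algebra
    also have "\<dots> = r^2" using s assms(2) by (simp add: power2_eq_square)
    finally show ?thesis using r unfolding x_y_def by (simp add: power_divide add_divide_distrib[symmetric])
  qed
  moreover have "x * v$1 + y * v$2 = v$3"
  proof -
    have "x * v$1 + y * v$2 = v$3 * r / r"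
      unfolding x_y_def r_def by (simp add: add_divide_distrib[symmetric] power2_eq_square algebra_simps)
    then show ?thesis using r by simp
  qed
  ultimately have "nullvec (null_dir \<sigma> v) \<and> future_pointing (null_dir \<sigma> v) \<and> norm (null_dir \<sigma> v) = 1"
    and "lin (null_dir \<sigma> v) v = 0"
    unfolding dir unit_null_future_iff
    by (auto simp: lin_def power_mult_distrib power_divide add_divide_distrib[symmetric])
  then show "nullvec (null_dir \<sigma> v)" "future_pointing (null_dir \<sigma> v)"
    "norm (null_dir \<sigma> v) = 1" "lin (null_dir \<sigma> v) v = 0" by blast+
qed

lemma det3_null_dir_pos:
  assumes "spacelike v"
  shows "det3 (null_dir 1 v) (null_dir (-1) v) v > 0"
proof -
  define r where "r = v$1^2 + v$2^2"
  define s where "s = sqrt (r - v$3^2)"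
  have "r > v$3^2" using assms unfolding spacelike_iff r_def .
  then have r: "r > 0" and s: "s > 0" "s^2 = r - v$3^2"
    unfolding s_def by (auto intro: le_less_trans[OF zero_le_power2])
  have "det3 (null_dir 1 v) (null_dir (-1) v) v
      = (v$3 * ((v$3 * v$1 - s * v$2) * (v$3 * v$2 - s * v$1) - (v$3 * v$2 + s * v$1) * (v$3 * v$1 + s * v$2))
         + r * (v$1 * (2 * s * v$1) + v$2 * (2 * s * v$2))) / (2 * r^2)"
    unfolding det3_eq null_dir_def Let_def r_def[symmetric] s_def[symmetric] using r
    by (simp add: field_simps power2_eq_square)
  also have "\<dots> = (2 * r * (s * (r - v$3^2))) / (2 * r^2)"
    unfolding r_def by algebra
  also have "\<dots> = s^3 / r"
    using r s by (simp add: power2_eq_square power3_eq_cube)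
  finally show ?thesis using r s by simp
qed

lemma unit_null_orth_cases:
  assumes "spacelike v" "nullvec a" "future_pointing a" "norm a = 1" "lin a v = 0"
  obtains "a = null_dir 1 v" | "a = null_dir (-1) v"
proof -
  define r where "r = v$1^2 + v$2^2"
  define s where "s = sqrt (r - v$3^2)"
  define c :: real where "c = 1 / sqrt 2"
  define t where "t = a$2 * v$1 - a$1 * v$2"
  have "r > v$3^2" using assms(1) unfolding spacelike_iff r_def .
  then have r: "r > 0" and s: "s^2 = r - v$3^2"
    unfolding s_def by (auto intro: le_less_trans[OF zero_le_power2])
  have a3: "a$3 = c" and circ: "a$1^2 + a$2^2 = 1/2"
    using assms(2-4) unit_null_future_iff[of a] unfolding c_def by blast+
  have c2: "c^2 = 1/2" unfolding c_def by (simp add: power_divide)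
  have line: "a$1 * v$1 + a$2 * v$2 = c * v$3" using assms(5) a3 unfolding lin_def by simp
  \<comment> \<open>coordinates of (a1, a2) in the orthogonal frame (v1, v2), (-v2, v1)\<close>
  have a1: "a$1 * r = c * v$3 * v$1 - t * v$2" and a2: "a$2 * r = c * v$3 * v$2 + t * v$1"
    using line unfolding r_def t_def by (simp_all add: power2_eq_square algebra_simps, algebra+)
  have "r^2 / 2 = (c^2 * v$3^2 + t^2) * r"
  proof -
    have "r^2 / 2 = r^2 * (a$1^2 + a$2^2)" using circ by simp
    also have "\<dots> = (a$1 * r)^2 + (a$2 * r)^2" by (simp add: power_mult_distrib algebra_simps)
    also have "\<dots> = (c * v$3 * v$1 - t * v$2)^2 + (c * v$3 * v$2 + t * v$1)^2" by (simp only: a1 a2)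
    also have "\<dots> = (c^2 * v$3^2 + t^2) * r" unfolding r_def by algebra
    finally show ?thesis .
  qed
  then have "r * (r / 2) = r * (v$3^2 / 2 + t^2)" using c2 by (simp add: power2_eq_square algebra_simps)
  then have "r = 2 * t^2 + v$3^2" using r by simp
  then have "t^2 = (c * s)^2" using s c2 by (simp add: power_mult_distrib)
  then obtain \<sigma> where \<sigma>: "\<sigma> = 1 \<or> \<sigma> = -1" and "t = \<sigma> * (c * s)"
    by (metis mult_1 mult_minus1 power2_eq_iff)
  then have "a = null_dir \<sigma> v"
    using a1 a2 a3 r unfolding null_dir_def Let_def r_def[symmetric] s_def[symmetric] c_def[symmetric]
    by (simp add: vec_eq_iff forall_3 field_simps)
  with \<sigma> that show ?thesis by blast
qed

lemma null_pair_null_dir: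
  assumes "spacelike v"
  shows "null_pair v (null_dir 1 v) (null_dir (-1) v)"
  using null_dir_unit_null_orth[OF assms, of 1] null_dir_unit_null_orth[OF assms, of "-1"]
    det3_null_dir_pos[OF assms]
  unfolding null_pair_def by simp

lemma null_pair_unique:
  assumes "spacelike v" "null_pair v a b"
  shows "a = null_dir 1 v \<and> b = null_dir (-1) v"
proof -
  have det_aa: "det3 x x v = 0" and det_swap: "det3 y x v = - det3 x y v" for x y
    unfolding det3_eq by (simp_all add: algebra_simps)
  have "x = null_dir 1 v \<or> x = null_dir (-1) v"
    if "nullvec x" "future_pointing x" "norm x = 1" "lin x v = 0" for x
    using unit_null_orth_cases[OF assms(1) that] by blast
  then have "a = null_dir 1 v \<or> a = null_dir (-1) v" "b = null_dir 1 v \<or> b = null_dir (-1) v"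
    using assms(2) unfolding null_pair_def by blast+
  moreover have "det3 a b v > 0" using assms(2) unfolding null_pair_def by simp
  ultimately show ?thesis
    using det3_null_dir_pos[OF assms(1)] det_aa det_swap[of "null_dir 1 v" "null_dir (-1) v"]
    by force
qed

lemma null_pair_vminus_vplus:
  assumes "spacelike v"
  shows "null_pair v (vminus v) (vplus v)"
proof -
  have "\<exists>!ab. null_pair v (fst ab) (snd ab)"
  proof (rule ex1I[of _ "(null_dir 1 v, null_dir (-1) v)"])
    show "null_pair v (fst (null_dir 1 v, null_dir (-1) v)) (snd (null_dir 1 v, null_dir (-1) v))"
      using null_pair_null_dir[OF assms] by simp
  next
    fix ab assume "null_pair v (fst ab) (snd ab)"
    then show "ab = (null_dir 1 v, null_dir (-1) v)"
      using null_pair_unique[OF assms] by (simp add: prod_eq_iff)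
  qed
  from theI'[OF this] show ?thesis unfolding vminus_def vplus_def .
qed

lemma lin_future_causal_neg:
  assumes "timelike w" "future_pointing w" "lin a a \<le> 0" "future_pointing a"
  shows "lin w a < 0"
proof -
  have w: "w$1^2 + w$2^2 < w$3^2" "w$3 > 0" and a: "a$1^2 + a$2^2 \<le> a$3^2" "a$3 > 0"
    using assms unfolding timelike_def future_pointing_def lin_def by (auto simp: power2_eq_square)
  have "(w$1 * a$1 + w$2 * a$2)^2 \<le> (w$1^2 + w$2^2) * (a$1^2 + a$2^2)"
    using zero_le_power2[of "w$1 * a$2 - w$2 * a$1"] by (simp add: power2_eq_square algebra_simps)
  also have "\<dots> \<le> (w$1^2 + w$2^2) * a$3^2" using a(1) by (simp add: mult_left_mono)
  also have "\<dots> < w$3^2 * a$3^2" using w(1) a(2) by (simp add: mult_strict_right_mono)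
  finally have "(w$1 * a$1 + w$2 * a$2)^2 < (w$3 * a$3)^2" by (simp add: power_mult_distrib)
  then have "w$1 * a$1 + w$2 * a$2 < w$3 * a$3"
    using w a by (smt (verit) power2_le_imp_le mult_pos_pos)
  then show ?thesis unfolding lin_def by simp
qed

lemma eventually_affine_pos_at_top:
  fixes a b :: real
  assumes "b > 0"
  shows "\<forall>\<^sub>F t in at_top. a + t * b > 0"
  using eventually_gt_at_top[of "-a/b"] by eventually_elim (use assms in \<open>simp add: field_simps\<close>)

lemma eventually_affine_neg_at_top:
  fixes a b :: real
  assumes "b < 0"
  shows "\<forall>\<^sub>F t in at_top. a + t * b < 0"
  using eventually_affine_pos_at_top[of "-b" "-a"] assms by (auto elim: eventually_mono)

lemma wedge_subset_interior_crooked_halfspace: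
  "{x. 0 < lin (x - p) v \<and> lin (x - p) (vplus v) < 0} \<subseteq> interior (crooked_halfspace v p)"
proof (rule interior_maximal)
  show "open {x. 0 < lin (x - p) v \<and> lin (x - p) (vplus v) < 0}"
    unfolding Collect_conj_eq
    by (intro open_Int open_Collect_less continuous_on_const continuous_on_lin_left)
qed (auto simp: crooked_halfspace_def)

lemma eventually_ray_in_interior_crooked_halfspace_iff:
  assumes "spacelike v" "timelike w" "future_pointing w" "lin w v \<noteq> 0"
  shows "(\<forall>\<^sub>F t in at_top. q + t *\<^sub>R w \<in> interior (crooked_halfspace v p)) \<longleftrightarrow> lin w v > 0"
proof -
  have np: "null_pair v (vminus v) (vplus v)" using null_pair_vminus_vplus[OF assms(1)] .
  have w_minus: "lin w (vminus v) < 0" and w_plus: "lin w (vplus v) < 0"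
    using np lin_future_causal_neg[OF assms(2,3)] unfolding null_pair_def nullvec_def by auto
  have ray: "lin (q + t *\<^sub>R w - p) y = lin (q - p) y + t * lin w y" for t y
    by (simp add: lin_def algebra_simps)
  show ?thesis
  proof
    assume in_int: "\<forall>\<^sub>F t in at_top. q + t *\<^sub>R w \<in> interior (crooked_halfspace v p)"
    show "lin w v > 0"
    proof (rule ccontr)
      assume "\<not> lin w v > 0"
      with assms(4) have "lin w v < 0" by simp
      from in_int eventually_affine_neg_at_top[OF this, of "lin (q - p) v"]
        eventually_affine_neg_at_top[OF w_minus, of "lin (q - p) (vminus v)"]
      have "\<forall>\<^sub>F (t::real) in at_top. False"
      proof eventually_elim
        case (elim t)
        then show False
          using interior_subset[of "crooked_halfspace v p"] by (auto simp: crooked_halfspace_def ray)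
      qed
      then show False by simp
    qed
  next
    assume "lin w v > 0"
    from eventually_affine_pos_at_top[OF this, of "lin (q - p) v"]
      eventually_affine_neg_at_top[OF w_plus, of "lin (q - p) (vplus v)"]
    show "\<forall>\<^sub>F t in at_top. q + t *\<^sub>R w \<in> interior (crooked_halfspace v p)"
    proof eventually_elim
      case (elim t)
      then show ?case using wedge_subset_interior_crooked_halfspace by (force simp: ray)
    qed
  qed
qed

lemma ray_point_pos_multiple:
  assumes "timelike w"
  obtains k where "k > 0" "ray_point q w = k *\<^sub>R w" "k^2 * lin w w = -1"
proof
  show "1 / sqrt (- lin w w) > 0" "ray_point q w = (1 / sqrt (- lin w w)) *\<^sub>R w"
    using assms unfolding timelike_def ray_point_def by simp_all
  show "(1 / sqrt (- lin w w))^2 * lin w w = -1"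
    using assms unfolding timelike_def by (simp add: power_divide)
qed

lemma ray_point_in_interior_HS_iff:
  assumes "timelike w" "future_pointing w" "lin w v \<noteq> 0"
  shows "ray_point q w \<in> (top_of_set H2) interior_of (HS v) \<longleftrightarrow> lin w v > 0"
proof -
  obtain k where k: "k > 0" "ray_point q w = k *\<^sub>R w" "k^2 * lin w w = -1"
    using ray_point_pos_multiple[OF assms(1)] .
  have lin_u: "lin (ray_point q w) v = k * lin w v" unfolding k(2) lin_scaleR_left ..
  have "lin (k *\<^sub>R w) (k *\<^sub>R w) = k^2 * lin w w"
    unfolding lin_scaleR_left lin_commute[of w "k *\<^sub>R w"] by (simp add: power2_eq_square)
  then have "lin (k *\<^sub>R w) (k *\<^sub>R w) = -1" using k(3) by simp
  then have u_H2: "ray_point q w \<in> H2"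
    using k(1,2) assms(2) unfolding H2_def future_pointing_def by simp
  show ?thesis
  proof
    assume "ray_point q w \<in> (top_of_set H2) interior_of (HS v)"
    then have "ray_point q w \<in> HS v" by (rule subsetD[OF interior_of_subset])
    then have "k * lin w v \<ge> 0" unfolding HS_def lin_u[symmetric] by simp
    then show "lin w v > 0" using k(1) assms(3) by (simp add: zero_le_mult_iff)
  next
    assume "lin w v > 0"
    then have "ray_point q w \<in> H2 \<inter> {x. 0 < lin (x - 0) v}"
      using u_H2 k(1) lin_u by simp
    moreover have "H2 \<inter> {x. 0 < lin (x - 0) v} \<subseteq> (top_of_set H2) interior_of (HS v)"
    proof (rule interior_of_maximal)
      show "H2 \<inter> {x. 0 < lin (x - 0) v} \<subseteq> HS v" unfolding HS_def by auto
      show "openin (top_of_set H2) (H2 \<inter> {x. 0 < lin (x - 0) v})"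
        by (intro openin_open_Int open_Collect_less continuous_on_const continuous_on_lin_left)
    qed
    ultimately show "ray_point q w \<in> (top_of_set H2) interior_of (HS v)" by blast
  qed
qed

theorem lemma3p1:
  fixes p q v w :: "real^3"
  assumes "spacelike v" and "timelike w" and "future_pointing w" and "lin w v \<noteq> 0"
  shows "(\<forall>\<^sub>F t in at_top. q + t *\<^sub>R w \<in> interior (crooked_halfspace v p))
     \<longleftrightarrow> ray_point q w \<in> (top_of_set H2) interior_of (HS v)"
  using eventually_ray_in_interior_crooked_halfspace_iff[OF assms, of q p]
    ray_point_in_interior_HS_iff[OF assms(2-4), of q]
  by simp

end
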